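(* Let $F:\mathcal G\to\mathcal H$ be a strict Gray-functor that is Cartesian with respect to $(-)_1$. Then $\overrightarrow F:\overrightarrow{\mathcal G}\to\overrightarrow{\mathcal H}$ is Cartesian with respect to $(-)_1$.
   Context: Conventions: in a Gray-category $\#_0,\#_1,\#_2$ denote composition along 0-, 1-, 2-cells (including whiskering), in applicative order. $(-)_1:\mathbf{GrayCat}\to\mathbf{Cat}$ sends a Gray-category to its underlying category of 0- and 1-cells (and a strict Gray-functor to its restriction). A strict Gray-functor $F:\mathcal G\to\mathcal H$ is Cartesian with respect to $(-)_1$ if for every strict Gray-functor $K:\mathcal K\to\mathcal H$ and functor $u:\mathcal K_1\to\mathcal G_1$ with $F_1\circ u=K_1$ there is a unique strict Gray-functor $\hat u:\mathcal K\to\mathcal G$ with $\hat u_1=u$ and $F\circ\hat u=K$; equivalently, for every pair of parallel 1-cells $F$ is bijective on the 2-cells between them, and for every pair of parallel 2-cells bijective on the 3-cells between them. Path space $\overrightarrow{\mathcal H}$: 0-cells are 1-cells $f:x\to y$ of $\mathcal H$; 1-cells $f\to f'$ (with $f':x'\to y'$) are $(g_2;g_0,g_1)$ with $g_0:x\to x'$, $g_1:y\to y'$, $g_2:g_1\#_0f\Rightarrow f'\#_0g_0$; 2-cells $(g_2;g_0,g_1)\Rightarrow(h_2;h_0,h_1)$ are $(\alpha_3;\alpha_1,\alpha_2)$ with $\alpha_1:g_0\Rightarrow h_0$, $\alpha_2:g_1\Rightarrow h_1$, $\alpha_3:(f'\#_0\alpha_1)\#_1g_2\Rrightarrow h_2\#_1(\alpha_2\#_0f)$;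 3-cells are pairs $(\Gamma_1,\Gamma_2)$, $\Gamma_i:\alpha_i\Rrightarrow\beta_i$, with $\beta_3\#_2((f'\#_0\Gamma_1)\#_1g_2)=(h_2\#_1(\Gamma_2\#_0f))\#_2\alpha_3$; all operations are given by pasting in $\mathcal H$ (e.g. $(h_2;h_0,h_1)\square_0(g_2;g_0,g_1)=((h_2\#_0g_0)\#_1(h_1\#_0g_2);h_0\#_0g_0,h_1\#_0g_1)$, 3-cells compose componentwise). For a strict Gray-functor $F$, $\overrightarrow F$ applies $F$ to all components of cells. *)

theory Defs
  imports Main
begin

section \<open>Strict Gray-categories (explicit, cell-based presentation)\<close>

text \<open>
  A Gray-category is presented by its sets of 0-,1-,2-,3-cells with source and
  target maps, and the operations (applicative order throughout):
    comp1 g f        = g #0 f           (1-cells)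
    vcomp2 b a       = b #1 a           (2-cells)
    vcomp3 D C       = D #2 C           (3-cells)
    hcomp3 D C       = D #1 C           (3-cells along 2-cells)
    lw2 f a, rw2 a f = f #0 a, a #0 f   (whiskering of 2-cells by 1-cells)
    lw3 f C, rw3 C f = f #0 C, C #0 f   (whiskering of 3-cells by 1-cells)
    xch a b          = the interchange 3-cell for a,b composable along 0-cells,
                       xch a b : (f' #0 b) #1 (a #0 g) ==> (a #0 g') #1 (f #0 b)
                       for a : f => f', b : g => g'.
\<close>

record ('o,'a,'b,'c) gray =
  Obj :: "'o set"
  Cell1 :: "'a set"
  src1 :: "'a \<Rightarrow> 'o"
  tgt1 :: "'a \<Rightarrow> 'o"
  Cell2 :: "'b set"
  src2 :: "'b \<Rightarrow> 'a"
  tgt2 :: "'b \<Rightarrow> 'a"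
  Cell3 :: "'c set"
  src3 :: "'c \<Rightarrow> 'b"
  tgt3 :: "'c \<Rightarrow> 'b"
  id1 :: "'o \<Rightarrow> 'a"
  comp1 :: "'a \<Rightarrow> 'a \<Rightarrow> 'a"
  id2 :: "'a \<Rightarrow> 'b"
  vcomp2 :: "'b \<Rightarrow> 'b \<Rightarrow> 'b"
  id3 :: "'b \<Rightarrow> 'c"
  vcomp3 :: "'c \<Rightarrow> 'c \<Rightarrow> 'c"
  hcomp3 :: "'c \<Rightarrow> 'c \<Rightarrow> 'c"
  lw2 :: "'a \<Rightarrow> 'b \<Rightarrow> 'b"
  rw2 :: "'b \<Rightarrow> 'a \<Rightarrow> 'b"
  lw3 :: "'a \<Rightarrow> 'c \<Rightarrow> 'c"
  rw3 :: "'c \<Rightarrow> 'a \<Rightarrow> 'c"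
  xch :: "'b \<Rightarrow> 'b \<Rightarrow> 'c"

locale gray_cat =
  fixes G :: "('o,'a,'b,'c) gray"
  assumes src1_ob: "f \<in> Cell1 G \<Longrightarrow> src1 G f \<in> Obj G"
    and tgt1_ob: "f \<in> Cell1 G \<Longrightarrow> tgt1 G f \<in> Obj G"
    and src2_cell: "a \<in> Cell2 G \<Longrightarrow> src2 G a \<in> Cell1 G"
    and tgt2_cell: "a \<in> Cell2 G \<Longrightarrow> tgt2 G a \<in> Cell1 G"
    and par2: "a \<in> Cell2 G \<Longrightarrow>
        src1 G (src2 G a) = src1 G (tgt2 G a) \<and> tgt1 G (src2 G a) = tgt1 G (tgt2 G a)"
    and src3_cell: "C \<in> Cell3 G \<Longrightarrow> src3 G C \<in> Cell2 G"
    and tgt3_cell: "C \<in> Cell3 G \<Longrightarrow> tgt3 G C \<in> Cell2 G"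
    and par3: "C \<in> Cell3 G \<Longrightarrow>
        src2 G (src3 G C) = src2 G (tgt3 G C) \<and> tgt2 G (src3 G C) = tgt2 G (tgt3 G C)"
    and id1: "x \<in> Obj G \<Longrightarrow> id1 G x \<in> Cell1 G \<and> src1 G (id1 G x) = x \<and> tgt1 G (id1 G x) = x"
    and comp1: "\<lbrakk>f \<in> Cell1 G; g \<in> Cell1 G; tgt1 G f = src1 G g\<rbrakk> \<Longrightarrow>
        comp1 G g f \<in> Cell1 G \<and> src1 G (comp1 G g f) = src1 G f \<and> tgt1 G (comp1 G g f) = tgt1 G g"
    and comp1_idl: "f \<in> Cell1 G \<Longrightarrow> comp1 G (id1 G (tgt1 G f)) f = f"
    and comp1_idr: "f \<in> Cell1 G \<Longrightarrow> comp1 G f (id1 G (src1 G f)) = f"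
    and comp1_assoc: "\<lbrakk>f \<in> Cell1 G; g \<in> Cell1 G; h \<in> Cell1 G; tgt1 G f = src1 G g; tgt1 G g = src1 G h\<rbrakk>
        \<Longrightarrow> comp1 G h (comp1 G g f) = comp1 G (comp1 G h g) f"
    and id2: "f \<in> Cell1 G \<Longrightarrow> id2 G f \<in> Cell2 G \<and> src2 G (id2 G f) = f \<and> tgt2 G (id2 G f) = f"
    and vcomp2: "\<lbrakk>a \<in> Cell2 G; b \<in> Cell2 G; tgt2 G a = src2 G b\<rbrakk> \<Longrightarrow>
        vcomp2 G b a \<in> Cell2 G \<and> src2 G (vcomp2 G b a) = src2 G a \<and> tgt2 G (vcomp2 G b a) = tgt2 G b"
    and vcomp2_idl: "a \<in> Cell2 G \<Longrightarrow> vcomp2 G (id2 G (tgt2 G a)) a = a"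
    and vcomp2_idr: "a \<in> Cell2 G \<Longrightarrow> vcomp2 G a (id2 G (src2 G a)) = a"
    and vcomp2_assoc: "\<lbrakk>a \<in> Cell2 G; b \<in> Cell2 G; c \<in> Cell2 G; tgt2 G a = src2 G b; tgt2 G b = src2 G c\<rbrakk>
        \<Longrightarrow> vcomp2 G c (vcomp2 G b a) = vcomp2 G (vcomp2 G c b) a"
    and id3: "a \<in> Cell2 G \<Longrightarrow> id3 G a \<in> Cell3 G \<and> src3 G (id3 G a) = a \<and> tgt3 G (id3 G a) = a"
    and vcomp3: "\<lbrakk>C \<in> Cell3 G; D \<in> Cell3 G; tgt3 G C = src3 G D\<rbrakk> \<Longrightarrow>
        vcomp3 G D C \<in> Cell3 G \<and> src3 G (vcomp3 G D C) = src3 G C \<and> tgt3 G (vcomp3 G D C) = tgt3 G D"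
    and vcomp3_idl: "C \<in> Cell3 G \<Longrightarrow> vcomp3 G (id3 G (tgt3 G C)) C = C"
    and vcomp3_idr: "C \<in> Cell3 G \<Longrightarrow> vcomp3 G C (id3 G (src3 G C)) = C"
    and vcomp3_assoc: "\<lbrakk>C \<in> Cell3 G; D \<in> Cell3 G; E \<in> Cell3 G; tgt3 G C = src3 G D; tgt3 G D = src3 G E\<rbrakk>
        \<Longrightarrow> vcomp3 G E (vcomp3 G D C) = vcomp3 G (vcomp3 G E D) C"
    and hcomp3: "\<lbrakk>C \<in> Cell3 G; D \<in> Cell3 G; tgt2 G (src3 G C) = src2 G (src3 G D)\<rbrakk> \<Longrightarrow>
        hcomp3 G D C \<in> Cell3 G \<and> src3 G (hcomp3 G D C) = vcomp2 G (src3 G D) (src3 G C)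
        \<and> tgt3 G (hcomp3 G D C) = vcomp2 G (tgt3 G D) (tgt3 G C)"
    and hcomp3_idl: "C \<in> Cell3 G \<Longrightarrow> hcomp3 G (id3 G (id2 G (tgt2 G (src3 G C)))) C = C"
    and hcomp3_idr: "C \<in> Cell3 G \<Longrightarrow> hcomp3 G C (id3 G (id2 G (src2 G (src3 G C)))) = C"
    and hcomp3_assoc: "\<lbrakk>C \<in> Cell3 G; D \<in> Cell3 G; E \<in> Cell3 G;
        tgt2 G (src3 G C) = src2 G (src3 G D); tgt2 G (src3 G D) = src2 G (src3 G E)\<rbrakk>
        \<Longrightarrow> hcomp3 G E (hcomp3 G D C) = hcomp3 G (hcomp3 G E D) C"
    and hcomp3_id3: "\<lbrakk>a \<in> Cell2 G; b \<in> Cell2 G; tgt2 G a = src2 G b\<rbrakk> \<Longrightarrow>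
        hcomp3 G (id3 G b) (id3 G a) = id3 G (vcomp2 G b a)"
    and interchange3: "\<lbrakk>C \<in> Cell3 G; C' \<in> Cell3 G; D \<in> Cell3 G; D' \<in> Cell3 G;
        tgt3 G C = src3 G C'; tgt3 G D = src3 G D'; tgt2 G (src3 G C) = src2 G (src3 G D)\<rbrakk>
        \<Longrightarrow> hcomp3 G (vcomp3 G D' D) (vcomp3 G C' C) = vcomp3 G (hcomp3 G D' C') (hcomp3 G D C)"
    and lw2: "\<lbrakk>f \<in> Cell1 G; a \<in> Cell2 G; tgt1 G (src2 G a) = src1 G f\<rbrakk> \<Longrightarrow>
        lw2 G f a \<in> Cell2 G \<and> src2 G (lw2 G f a) = comp1 G f (src2 G a) \<and> tgt2 G (lw2 G f a) = comp1 G f (tgt2 G a)"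
    and rw2: "\<lbrakk>f \<in> Cell1 G; a \<in> Cell2 G; tgt1 G f = src1 G (src2 G a)\<rbrakk> \<Longrightarrow>
        rw2 G a f \<in> Cell2 G \<and> src2 G (rw2 G a f) = comp1 G (src2 G a) f \<and> tgt2 G (rw2 G a f) = comp1 G (tgt2 G a) f"
    and lw3: "\<lbrakk>f \<in> Cell1 G; C \<in> Cell3 G; tgt1 G (src2 G (src3 G C)) = src1 G f\<rbrakk> \<Longrightarrow>
        lw3 G f C \<in> Cell3 G \<and> src3 G (lw3 G f C) = lw2 G f (src3 G C) \<and> tgt3 G (lw3 G f C) = lw2 G f (tgt3 G C)"
    and rw3: "\<lbrakk>f \<in> Cell1 G; C \<in> Cell3 G; tgt1 G f = src1 G (src2 G (src3 G C))\<rbrakk> \<Longrightarrow>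
        rw3 G C f \<in> Cell3 G \<and> src3 G (rw3 G C f) = rw2 G (src3 G C) f \<and> tgt3 G (rw3 G C f) = rw2 G (tgt3 G C) f"
    and lw2_id2: "\<lbrakk>f \<in> Cell1 G; g \<in> Cell1 G; tgt1 G g = src1 G f\<rbrakk> \<Longrightarrow> lw2 G f (id2 G g) = id2 G (comp1 G f g)"
    and rw2_id2: "\<lbrakk>f \<in> Cell1 G; g \<in> Cell1 G; tgt1 G f = src1 G g\<rbrakk> \<Longrightarrow> rw2 G (id2 G g) f = id2 G (comp1 G g f)"
    and lw2_vcomp2: "\<lbrakk>f \<in> Cell1 G; a \<in> Cell2 G; b \<in> Cell2 G; tgt2 G a = src2 G b; tgt1 G (src2 G a) = src1 G f\<rbrakk>
        \<Longrightarrow> lw2 G f (vcomp2 G b a) = vcomp2 G (lw2 G f b) (lw2 G f a)"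
    and rw2_vcomp2: "\<lbrakk>f \<in> Cell1 G; a \<in> Cell2 G; b \<in> Cell2 G; tgt2 G a = src2 G b; tgt1 G f = src1 G (src2 G a)\<rbrakk>
        \<Longrightarrow> rw2 G (vcomp2 G b a) f = vcomp2 G (rw2 G b f) (rw2 G a f)"
    and lw3_id3: "\<lbrakk>f \<in> Cell1 G; a \<in> Cell2 G; tgt1 G (src2 G a) = src1 G f\<rbrakk> \<Longrightarrow> lw3 G f (id3 G a) = id3 G (lw2 G f a)"
    and rw3_id3: "\<lbrakk>f \<in> Cell1 G; a \<in> Cell2 G; tgt1 G f = src1 G (src2 G a)\<rbrakk> \<Longrightarrow> rw3 G (id3 G a) f = id3 G (rw2 G a f)"
    and lw3_vcomp3: "\<lbrakk>f \<in> Cell1 G; C \<in> Cell3 G; D \<in> Cell3 G; tgt3 G C = src3 G D; tgt1 G (src2 G (src3 G C)) = src1 G f\<rbrakk>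
        \<Longrightarrow> lw3 G f (vcomp3 G D C) = vcomp3 G (lw3 G f D) (lw3 G f C)"
    and rw3_vcomp3: "\<lbrakk>f \<in> Cell1 G; C \<in> Cell3 G; D \<in> Cell3 G; tgt3 G C = src3 G D; tgt1 G f = src1 G (src2 G (src3 G C))\<rbrakk>
        \<Longrightarrow> rw3 G (vcomp3 G D C) f = vcomp3 G (rw3 G D f) (rw3 G C f)"
    and lw3_hcomp3: "\<lbrakk>f \<in> Cell1 G; C \<in> Cell3 G; D \<in> Cell3 G; tgt2 G (src3 G C) = src2 G (src3 G D);
        tgt1 G (src2 G (src3 G C)) = src1 G f\<rbrakk>
        \<Longrightarrow> lw3 G f (hcomp3 G D C) = hcomp3 G (lw3 G f D) (lw3 G f C)"
    and rw3_hcomp3: "\<lbrakk>f \<in> Cell1 G; C \<in> Cell3 G; D \<in> Cell3 G; tgt2 G (src3 G C) = src2 G (src3 G D);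
        tgt1 G f = src1 G (src2 G (src3 G C))\<rbrakk>
        \<Longrightarrow> rw3 G (hcomp3 G D C) f = hcomp3 G (rw3 G D f) (rw3 G C f)"
    and lw2_id1: "a \<in> Cell2 G \<Longrightarrow> lw2 G (id1 G (tgt1 G (src2 G a))) a = a"
    and rw2_id1: "a \<in> Cell2 G \<Longrightarrow> rw2 G a (id1 G (src1 G (src2 G a))) = a"
    and lw2_comp1: "\<lbrakk>f \<in> Cell1 G; g \<in> Cell1 G; a \<in> Cell2 G; tgt1 G (src2 G a) = src1 G f; tgt1 G f = src1 G g\<rbrakk>
        \<Longrightarrow> lw2 G g (lw2 G f a) = lw2 G (comp1 G g f) a"
    and rw2_comp1: "\<lbrakk>f \<in> Cell1 G; g \<in> Cell1 G; a \<in> Cell2 G; tgt1 G f = src1 G g; tgt1 G g = src1 G (src2 G a)\<rbrakk>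
        \<Longrightarrow> rw2 G (rw2 G a g) f = rw2 G a (comp1 G g f)"
    and lw2_rw2: "\<lbrakk>f \<in> Cell1 G; g \<in> Cell1 G; a \<in> Cell2 G; tgt1 G f = src1 G (src2 G a); tgt1 G (src2 G a) = src1 G g\<rbrakk>
        \<Longrightarrow> lw2 G g (rw2 G a f) = rw2 G (lw2 G g a) f"
    and lw3_id1: "C \<in> Cell3 G \<Longrightarrow> lw3 G (id1 G (tgt1 G (src2 G (src3 G C)))) C = C"
    and rw3_id1: "C \<in> Cell3 G \<Longrightarrow> rw3 G C (id1 G (src1 G (src2 G (src3 G C)))) = C"
    and lw3_comp1: "\<lbrakk>f \<in> Cell1 G; g \<in> Cell1 G; C \<in> Cell3 G; tgt1 G (src2 G (src3 G C)) = src1 G f; tgt1 G f = src1 G g\<rbrakk>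
        \<Longrightarrow> lw3 G g (lw3 G f C) = lw3 G (comp1 G g f) C"
    and rw3_comp1: "\<lbrakk>f \<in> Cell1 G; g \<in> Cell1 G; C \<in> Cell3 G; tgt1 G f = src1 G g; tgt1 G g = src1 G (src2 G (src3 G C))\<rbrakk>
        \<Longrightarrow> rw3 G (rw3 G C g) f = rw3 G C (comp1 G g f)"
    and lw3_rw3: "\<lbrakk>f \<in> Cell1 G; g \<in> Cell1 G; C \<in> Cell3 G; tgt1 G f = src1 G (src2 G (src3 G C));
        tgt1 G (src2 G (src3 G C)) = src1 G g\<rbrakk>
        \<Longrightarrow> lw3 G g (rw3 G C f) = rw3 G (lw3 G g C) f"
    and xch: "\<lbrakk>a \<in> Cell2 G; b \<in> Cell2 G; src1 G (src2 G a) = tgt1 G (src2 G b)\<rbrakk> \<Longrightarrow>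
        xch G a b \<in> Cell3 G
        \<and> src3 G (xch G a b) = vcomp2 G (lw2 G (tgt2 G a) b) (rw2 G a (src2 G b))
        \<and> tgt3 G (xch G a b) = vcomp2 G (rw2 G a (tgt2 G b)) (lw2 G (src2 G a) b)"
    and xch_invertible: "\<lbrakk>a \<in> Cell2 G; b \<in> Cell2 G; src1 G (src2 G a) = tgt1 G (src2 G b)\<rbrakk> \<Longrightarrow>
        \<exists>D \<in> Cell3 G. src3 G D = tgt3 G (xch G a b) \<and> tgt3 G D = src3 G (xch G a b)
          \<and> vcomp3 G D (xch G a b) = id3 G (src3 G (xch G a b))
          \<and> vcomp3 G (xch G a b) D = id3 G (tgt3 G (xch G a b))"
    and xch_natural: "\<lbrakk>C \<in> Cell3 G; D \<in> Cell3 G; src1 G (src2 G (src3 G C)) = tgt1 G (src2 G (src3 G D))\<rbrakk> \<Longrightarrow>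
        vcomp3 G (hcomp3 G (rw3 G C (tgt2 G (src3 G D))) (lw3 G (src2 G (src3 G C)) D)) (xch G (src3 G C) (src3 G D))
        = vcomp3 G (xch G (tgt3 G C) (tgt3 G D))
            (hcomp3 G (lw3 G (tgt2 G (src3 G C)) D) (rw3 G C (src2 G (src3 G D))))"
    and xch_id2_left: "\<lbrakk>f \<in> Cell1 G; b \<in> Cell2 G; src1 G f = tgt1 G (src2 G b)\<rbrakk> \<Longrightarrow>
        xch G (id2 G f) b = id3 G (lw2 G f b)"
    and xch_id2_right: "\<lbrakk>a \<in> Cell2 G; g \<in> Cell1 G; src1 G (src2 G a) = tgt1 G g\<rbrakk> \<Longrightarrow>
        xch G a (id2 G g) = id3 G (rw2 G a g)"
    and xch_vcomp2_left: "\<lbrakk>a \<in> Cell2 G; a' \<in> Cell2 G; b \<in> Cell2 G; tgt2 G a = src2 G a';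
        src1 G (src2 G a) = tgt1 G (src2 G b)\<rbrakk> \<Longrightarrow>
        xch G (vcomp2 G a' a) b
        = vcomp3 G (hcomp3 G (id3 G (rw2 G a' (tgt2 G b))) (xch G a b))
                   (hcomp3 G (xch G a' b) (id3 G (rw2 G a (src2 G b))))"
    and xch_vcomp2_right: "\<lbrakk>a \<in> Cell2 G; b \<in> Cell2 G; b' \<in> Cell2 G; tgt2 G b = src2 G b';
        src1 G (src2 G a) = tgt1 G (src2 G b)\<rbrakk> \<Longrightarrow>
        xch G a (vcomp2 G b' b)
        = vcomp3 G (hcomp3 G (xch G a b') (id3 G (lw2 G (src2 G a) b)))
                   (hcomp3 G (id3 G (lw2 G (tgt2 G a) b')) (xch G a b))"
    and xch_lw2: "\<lbrakk>h \<in> Cell1 G; a \<in> Cell2 G; b \<in> Cell2 G; src1 G (src2 G a) = tgt1 G (src2 G b);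
        tgt1 G (src2 G a) = src1 G h\<rbrakk> \<Longrightarrow> xch G (lw2 G h a) b = lw3 G h (xch G a b)"
    and xch_rw2: "\<lbrakk>k \<in> Cell1 G; a \<in> Cell2 G; b \<in> Cell2 G; src1 G (src2 G a) = tgt1 G (src2 G b);
        tgt1 G k = src1 G (src2 G b)\<rbrakk> \<Longrightarrow> xch G a (rw2 G b k) = rw3 G (xch G a b) k"
    and xch_mid: "\<lbrakk>k \<in> Cell1 G; a \<in> Cell2 G; b \<in> Cell2 G; src1 G k = tgt1 G (src2 G b);
        tgt1 G k = src1 G (src2 G a)\<rbrakk> \<Longrightarrow> xch G (rw2 G a k) b = xch G a (lw2 G k b)"

section \<open>Strict Gray-functors\<close>

record ('o,'a,'b,'c,'p,'d,'e,'k) gfun =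
  map0 :: "'o \<Rightarrow> 'p"
  map1 :: "'a \<Rightarrow> 'd"
  map2 :: "'b \<Rightarrow> 'e"
  map3 :: "'c \<Rightarrow> 'k"

locale gray_functor = G: gray_cat G + H: gray_cat H
  for G :: "('o,'a,'b,'c) gray" and H :: "('p,'d,'e,'k) gray" +
  fixes F :: "('o,'a,'b,'c,'p,'d,'e,'k) gfun"
  assumes map0_cell: "x \<in> Obj G \<Longrightarrow> map0 F x \<in> Obj H"
    and map1_cell: "f \<in> Cell1 G \<Longrightarrow> map1 F f \<in> Cell1 H"
    and map2_cell: "a \<in> Cell2 G \<Longrightarrow> map2 F a \<in> Cell2 H"
    and map3_cell: "C \<in> Cell3 G \<Longrightarrow> map3 F C \<in> Cell3 H"
    and map1_src: "f \<in> Cell1 G \<Longrightarrow> src1 H (map1 F f) = map0 F (src1 G f)"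
    and map1_tgt: "f \<in> Cell1 G \<Longrightarrow> tgt1 H (map1 F f) = map0 F (tgt1 G f)"
    and map2_src: "a \<in> Cell2 G \<Longrightarrow> src2 H (map2 F a) = map1 F (src2 G a)"
    and map2_tgt: "a \<in> Cell2 G \<Longrightarrow> tgt2 H (map2 F a) = map1 F (tgt2 G a)"
    and map3_src: "C \<in> Cell3 G \<Longrightarrow> src3 H (map3 F C) = map2 F (src3 G C)"
    and map3_tgt: "C \<in> Cell3 G \<Longrightarrow> tgt3 H (map3 F C) = map2 F (tgt3 G C)"
    and map_id1: "x \<in> Obj G \<Longrightarrow> map1 F (id1 G x) = id1 H (map0 F x)"
    and map_comp1: "\<lbrakk>f \<in> Cell1 G; g \<in> Cell1 G; tgt1 G f = src1 G g\<rbrakk> \<Longrightarrow>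
        map1 F (comp1 G g f) = comp1 H (map1 F g) (map1 F f)"
    and map_id2: "f \<in> Cell1 G \<Longrightarrow> map2 F (id2 G f) = id2 H (map1 F f)"
    and map_vcomp2: "\<lbrakk>a \<in> Cell2 G; b \<in> Cell2 G; tgt2 G a = src2 G b\<rbrakk> \<Longrightarrow>
        map2 F (vcomp2 G b a) = vcomp2 H (map2 F b) (map2 F a)"
    and map_id3: "a \<in> Cell2 G \<Longrightarrow> map3 F (id3 G a) = id3 H (map2 F a)"
    and map_vcomp3: "\<lbrakk>C \<in> Cell3 G; D \<in> Cell3 G; tgt3 G C = src3 G D\<rbrakk> \<Longrightarrow>
        map3 F (vcomp3 G D C) = vcomp3 H (map3 F D) (map3 F C)"
    and map_hcomp3: "\<lbrakk>C \<in> Cell3 G; D \<in> Cell3 G; tgt2 G (src3 G C) = src2 G (src3 G D)\<rbrakk> \<Longrightarrow>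
        map3 F (hcomp3 G D C) = hcomp3 H (map3 F D) (map3 F C)"
    and map_lw2: "\<lbrakk>f \<in> Cell1 G; a \<in> Cell2 G; tgt1 G (src2 G a) = src1 G f\<rbrakk> \<Longrightarrow>
        map2 F (lw2 G f a) = lw2 H (map1 F f) (map2 F a)"
    and map_rw2: "\<lbrakk>f \<in> Cell1 G; a \<in> Cell2 G; tgt1 G f = src1 G (src2 G a)\<rbrakk> \<Longrightarrow>
        map2 F (rw2 G a f) = rw2 H (map2 F a) (map1 F f)"
    and map_lw3: "\<lbrakk>f \<in> Cell1 G; C \<in> Cell3 G; tgt1 G (src2 G (src3 G C)) = src1 G f\<rbrakk> \<Longrightarrow>
        map3 F (lw3 G f C) = lw3 H (map1 F f) (map3 F C)"
    and map_rw3: "\<lbrakk>f \<in> Cell1 G; C \<in> Cell3 G; tgt1 G f = src1 G (src2 G (src3 G C))\<rbrakk> \<Longrightarrow>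
        map3 F (rw3 G C f) = rw3 H (map3 F C) (map1 F f)"
    and map_xch: "\<lbrakk>a \<in> Cell2 G; b \<in> Cell2 G; src1 G (src2 G a) = tgt1 G (src2 G b)\<rbrakk> \<Longrightarrow>
        map3 F (xch G a b) = xch H (map2 F a) (map2 F b)"

section \<open>Cartesian with respect to the underlying-category functor (-)_1\<close>

text \<open>Local form of the Cartesian property: bijective on 2-cells between every pair of
  parallel 1-cells and on 3-cells between every pair of parallel 2-cells.\<close>

definition cartesian1 ::
  "('o,'a,'b,'c,'x) gray_scheme \<Rightarrow> ('p,'d,'e,'k,'y) gray_scheme \<Rightarrow> ('o,'a,'b,'c,'p,'d,'e,'k,'z) gfun_scheme \<Rightarrow> bool"
where
  "cartesian1 G H F \<longleftrightarrow>
     (\<forall>f \<in> Cell1 G. \<forall>f' \<in> Cell1 G. src1 G f = src1 G f' \<and> tgt1 G f = tgt1 G f' \<longrightarrow>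
        bij_betw (map2 F) {a \<in> Cell2 G. src2 G a = f \<and> tgt2 G a = f'}
                          {b \<in> Cell2 H. src2 H b = map1 F f \<and> tgt2 H b = map1 F f'})
   \<and> (\<forall>a \<in> Cell2 G. \<forall>a' \<in> Cell2 G. src2 G a = src2 G a' \<and> tgt2 G a = tgt2 G a' \<longrightarrow>
        bij_betw (map3 F) {C \<in> Cell3 G. src3 G C = a \<and> tgt3 G C = a'}
                          {D \<in> Cell3 H. src3 H D = map2 F a \<and> tgt3 H D = map2 F a'})"

section \<open>Path spaces\<close>

type_synonym ('a,'b) pcell1 = "'a \<times> 'a \<times> 'b \<times> 'a \<times> 'a"
  \<comment> \<open>(f, f', g2, g0, g1): the 1-cell (g2; g0, g1) : f \<rightarrow> f'\<close>
type_synonym ('a,'b,'c) pcell2 = "('a,'b) pcell1 \<times> ('a,'b) pcell1 \<times> 'c \<times> 'b \<times> 'b"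
  \<comment> \<open>(g, h, a3, a1, a2): the 2-cell (a3; a1, a2) : g \<Rightarrow> h\<close>
type_synonym ('a,'b,'c) pcell3 = "('a,'b,'c) pcell2 \<times> ('a,'b,'c) pcell2 \<times> 'c \<times> 'c"
  \<comment> \<open>(A, B, C1, C2): the 3-cell (C1, C2) : A \<Rrightarrow> B\<close>

fun p1s :: "('a,'b) pcell1 \<Rightarrow> 'a" where "p1s (f, f', g2, g0, g1) = f"
fun p1t :: "('a,'b) pcell1 \<Rightarrow> 'a" where "p1t (f, f', g2, g0, g1) = f'"
fun p1c :: "('a,'b) pcell1 \<Rightarrow> 'b" where "p1c (f, f', g2, g0, g1) = g2"
fun p1l :: "('a,'b) pcell1 \<Rightarrow> 'a" where "p1l (f, f', g2, g0, g1) = g0"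
fun p1r :: "('a,'b) pcell1 \<Rightarrow> 'a" where "p1r (f, f', g2, g0, g1) = g1"

fun p2s :: "('a,'b,'c) pcell2 \<Rightarrow> ('a,'b) pcell1" where "p2s (g, h, a3, a1, a2) = g"
fun p2t :: "('a,'b,'c) pcell2 \<Rightarrow> ('a,'b) pcell1" where "p2t (g, h, a3, a1, a2) = h"
fun p2c :: "('a,'b,'c) pcell2 \<Rightarrow> 'c" where "p2c (g, h, a3, a1, a2) = a3"
fun p2l :: "('a,'b,'c) pcell2 \<Rightarrow> 'b" where "p2l (g, h, a3, a1, a2) = a1"
fun p2r :: "('a,'b,'c) pcell2 \<Rightarrow> 'b" where "p2r (g, h, a3, a1, a2) = a2"

fun p3s :: "('a,'b,'c) pcell3 \<Rightarrow> ('a,'b,'c) pcell2" where "p3s (A, B, C1, C2) = A"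
fun p3t :: "('a,'b,'c) pcell3 \<Rightarrow> ('a,'b,'c) pcell2" where "p3t (A, B, C1, C2) = B"

definition path_cells1 :: "('o,'a,'b,'c) gray \<Rightarrow> ('a,'b) pcell1 set" where
  "path_cells1 G = {(f, f', g2, g0, g1).
      f \<in> Cell1 G \<and> f' \<in> Cell1 G \<and> g0 \<in> Cell1 G \<and> g1 \<in> Cell1 G
    \<and> src1 G g0 = src1 G f \<and> tgt1 G g0 = src1 G f'
    \<and> src1 G g1 = tgt1 G f \<and> tgt1 G g1 = tgt1 G f'
    \<and> g2 \<in> Cell2 G \<and> src2 G g2 = comp1 G g1 f \<and> tgt2 G g2 = comp1 G f' g0}"

definition path_cells2 :: "('o,'a,'b,'c) gray \<Rightarrow> ('a,'b,'c) pcell2 set" where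
  "path_cells2 G = {(g, h, a3, a1, a2).
      g \<in> path_cells1 G \<and> h \<in> path_cells1 G \<and> p1s g = p1s h \<and> p1t g = p1t h
    \<and> a1 \<in> Cell2 G \<and> src2 G a1 = p1l g \<and> tgt2 G a1 = p1l h
    \<and> a2 \<in> Cell2 G \<and> src2 G a2 = p1r g \<and> tgt2 G a2 = p1r h
    \<and> a3 \<in> Cell3 G
    \<and> src3 G a3 = vcomp2 G (lw2 G (p1t g) a1) (p1c g)
    \<and> tgt3 G a3 = vcomp2 G (p1c h) (rw2 G a2 (p1s g))}"

definition path_cells3 :: "('o,'a,'b,'c) gray \<Rightarrow> ('a,'b,'c) pcell3 set" where
  "path_cells3 G = {(A, B, C1, C2).
      A \<in> path_cells2 G \<and> B \<in> path_cells2 G \<and> p2s A = p2s B \<and> p2t A = p2t B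
    \<and> C1 \<in> Cell3 G \<and> src3 G C1 = p2l A \<and> tgt3 G C1 = p2l B
    \<and> C2 \<in> Cell3 G \<and> src3 G C2 = p2r A \<and> tgt3 G C2 = p2r B
    \<and> vcomp3 G (p2c B) (hcomp3 G (lw3 G (p1t (p2s A)) C1) (id3 G (p1c (p2s A))))
      = vcomp3 G (hcomp3 G (id3 G (p1c (p2t A))) (rw3 G C2 (p1s (p2s A)))) (p2c A)}"

definition inv3 :: "('o,'a,'b,'c) gray \<Rightarrow> 'c \<Rightarrow> 'c" where
  "inv3 G C = (THE D. D \<in> Cell3 G \<and> src3 G D = tgt3 G C \<and> tgt3 G D = src3 G C
      \<and> vcomp3 G D C = id3 G (src3 G C) \<and> vcomp3 G C D = id3 G (tgt3 G C))"

fun path_id1 :: "('o,'a,'b,'c) gray \<Rightarrow> 'a \<Rightarrow> ('a,'b) pcell1" where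
  "path_id1 G f = (f, f, id2 G f, id1 G (src1 G f), id1 G (tgt1 G f))"

fun path_comp1 :: "('o,'a,'b,'c) gray \<Rightarrow> ('a,'b) pcell1 \<Rightarrow> ('a,'b) pcell1 \<Rightarrow> ('a,'b) pcell1" where
  "path_comp1 G (f', f'', h2, h0, h1) (f, e, g2, g0, g1) =
     (f, f'', vcomp2 G (rw2 G h2 g0) (lw2 G h1 g2), comp1 G h0 g0, comp1 G h1 g1)"

fun path_id2 :: "('o,'a,'b,'c) gray \<Rightarrow> ('a,'b) pcell1 \<Rightarrow> ('a,'b,'c) pcell2" where
  "path_id2 G (f, f', g2, g0, g1) =
     ((f, f', g2, g0, g1), (f, f', g2, g0, g1), id3 G g2, id2 G g0, id2 G g1)"

fun path_vcomp2 :: "('o,'a,'b,'c) gray \<Rightarrow> ('a,'b,'c) pcell2 \<Rightarrow> ('a,'b,'c) pcell2 \<Rightarrow> ('a,'b,'c) pcell2" where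
  "path_vcomp2 G (h, k, b3, b1, b2) (g, h', a3, a1, a2) =
     (g, k,
      vcomp3 G (hcomp3 G b3 (id3 G (rw2 G a2 (p1s g)))) (hcomp3 G (id3 G (lw2 G (p1t g) b1)) a3),
      vcomp2 G b1 a1, vcomp2 G b2 a2)"

fun path_id3 :: "('o,'a,'b,'c) gray \<Rightarrow> ('a,'b,'c) pcell2 \<Rightarrow> ('a,'b,'c) pcell3" where
  "path_id3 G A = (A, A, id3 G (p2l A), id3 G (p2r A))"

fun path_vcomp3 :: "('o,'a,'b,'c) gray \<Rightarrow> ('a,'b,'c) pcell3 \<Rightarrow> ('a,'b,'c) pcell3 \<Rightarrow> ('a,'b,'c) pcell3" where
  "path_vcomp3 G (B, C, D1, D2) (A, B', C1, C2) = (A, C, vcomp3 G D1 C1, vcomp3 G D2 C2)"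

fun path_hcomp3 :: "('o,'a,'b,'c) gray \<Rightarrow> ('a,'b,'c) pcell3 \<Rightarrow> ('a,'b,'c) pcell3 \<Rightarrow> ('a,'b,'c) pcell3" where
  "path_hcomp3 G (B, B', D1, D2) (A, A', C1, C2) =
     (path_vcomp2 G B A, path_vcomp2 G B' A', hcomp3 G D1 C1, hcomp3 G D2 C2)"

fun path_lw2 :: "('o,'a,'b,'c) gray \<Rightarrow> ('a,'b) pcell1 \<Rightarrow> ('a,'b,'c) pcell2 \<Rightarrow> ('a,'b,'c) pcell2" where
  "path_lw2 G (f', f'', k2, k0, k1) (g, h, a3, a1, a2) =
     (path_comp1 G (f', f'', k2, k0, k1) g, path_comp1 G (f', f'', k2, k0, k1) h,
      vcomp3 G (hcomp3 G (id3 G (rw2 G k2 (p1l h))) (lw3 G k1 a3))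
               (hcomp3 G (xch G k2 a1) (id3 G (lw2 G k1 (p1c g)))),
      lw2 G k0 a1, lw2 G k1 a2)"

fun path_rw2 :: "('o,'a,'b,'c) gray \<Rightarrow> ('a,'b,'c) pcell2 \<Rightarrow> ('a,'b) pcell1 \<Rightarrow> ('a,'b,'c) pcell2" where
  "path_rw2 G (g, h, a3, a1, a2) (f0, f, k2, k0, k1) =
     (path_comp1 G g (f0, f, k2, k0, k1), path_comp1 G h (f0, f, k2, k0, k1),
      vcomp3 G (hcomp3 G (id3 G (rw2 G (p1c h) k0)) (inv3 G (xch G a2 k2)))
               (hcomp3 G (rw3 G a3 k0) (id3 G (lw2 G (p1r g) k2))),
      rw2 G a1 k0, rw2 G a2 k1)"

fun path_lw3 :: "('o,'a,'b,'c) gray \<Rightarrow> ('a,'b) pcell1 \<Rightarrow> ('a,'b,'c) pcell3 \<Rightarrow> ('a,'b,'c) pcell3" where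
  "path_lw3 G k (A, B, C1, C2) = (path_lw2 G k A, path_lw2 G k B, lw3 G (p1l k) C1, lw3 G (p1r k) C2)"

fun path_rw3 :: "('o,'a,'b,'c) gray \<Rightarrow> ('a,'b,'c) pcell3 \<Rightarrow> ('a,'b) pcell1 \<Rightarrow> ('a,'b,'c) pcell3" where
  "path_rw3 G (A, B, C1, C2) k = (path_rw2 G A k, path_rw2 G B k, rw3 G C1 (p1l k), rw3 G C2 (p1r k))"

fun path_xch :: "('o,'a,'b,'c) gray \<Rightarrow> ('a,'b,'c) pcell2 \<Rightarrow> ('a,'b,'c) pcell2 \<Rightarrow> ('a,'b,'c) pcell3" where
  "path_xch G A B =
     (path_vcomp2 G (path_lw2 G (p2t A) B) (path_rw2 G A (p2s B)),
      path_vcomp2 G (path_rw2 G A (p2t B)) (path_lw2 G (p2s A) B),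
      xch G (p2l A) (p2l B), xch G (p2r A) (p2r B))"

definition path :: "('o,'a,'b,'c) gray \<Rightarrow> ('a, ('a,'b) pcell1, ('a,'b,'c) pcell2, ('a,'b,'c) pcell3) gray" where
  "path G = \<lparr> Obj = Cell1 G,
      Cell1 = path_cells1 G, src1 = p1s, tgt1 = p1t,
      Cell2 = path_cells2 G, src2 = p2s, tgt2 = p2t,
      Cell3 = path_cells3 G, src3 = p3s, tgt3 = p3t,
      id1 = path_id1 G, comp1 = path_comp1 G,
      id2 = path_id2 G, vcomp2 = path_vcomp2 G,
      id3 = path_id3 G, vcomp3 = path_vcomp3 G, hcomp3 = path_hcomp3 G,
      lw2 = path_lw2 G, rw2 = path_rw2 G, lw3 = path_lw3 G, rw3 = path_rw3 G,
      xch = path_xch G \<rparr>"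

fun path_map1 :: "('o,'a,'b,'c,'p,'d,'e,'k) gfun \<Rightarrow> ('a,'b) pcell1 \<Rightarrow> ('d,'e) pcell1" where
  "path_map1 F (f, f', g2, g0, g1) = (map1 F f, map1 F f', map2 F g2, map1 F g0, map1 F g1)"

fun path_map2 :: "('o,'a,'b,'c,'p,'d,'e,'k) gfun \<Rightarrow> ('a,'b,'c) pcell2 \<Rightarrow> ('d,'e,'k) pcell2" where
  "path_map2 F (g, h, a3, a1, a2) = (path_map1 F g, path_map1 F h, map3 F a3, map2 F a1, map2 F a2)"

fun path_map3 :: "('o,'a,'b,'c,'p,'d,'e,'k) gfun \<Rightarrow> ('a,'b,'c) pcell3 \<Rightarrow> ('d,'e,'k) pcell3" where
  "path_map3 F (A, B, C1, C2) = (path_map2 F A, path_map2 F B, map3 F C1, map3 F C2)"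

definition path_fun ::
  "('o,'a,'b,'c,'p,'d,'e,'k) gfun \<Rightarrow>
   ('a, ('a,'b) pcell1, ('a,'b,'c) pcell2, ('a,'b,'c) pcell3,
    'd, ('d,'e) pcell1, ('d,'e,'k) pcell2, ('d,'e,'k) pcell3) gfun" where
  "path_fun F = \<lparr> map0 = map1 F, map1 = path_map1 F, map2 = path_map2 F, map3 = path_map3 F \<rparr>"

end

theory Submission
  imports Defs
begin

text \<open>A cell of the path space is a tuple of cells of the base, subject to boundary
  conditions and, from dimension 2 on, one equation between 3-cells; the path functor acts
  componentwise. Injectivity on path cells is therefore componentwise. To lift a path 2-cell
  (b3; b1, b2) one first lifts b1 and b2; this determines the two parallel 2-cells of the base
  between which the component b3 is then lifted. To lift a path 3-cell one lifts both
  components, and the defining equation holds upstairs because its two sides are parallel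
  3-cells with equal images, so injectivity of F on 3-cells identifies them.\<close>

definition path2_dom :: "('o,'a,'b,'c) gray \<Rightarrow> ('a,'b) pcell1 \<Rightarrow> 'b \<Rightarrow> 'b" where
  "path2_dom G g a1 = vcomp2 G (lw2 G (p1t g) a1) (p1c g)"

definition path2_cod :: "('o,'a,'b,'c) gray \<Rightarrow> ('a,'b) pcell1 \<Rightarrow> ('a,'b) pcell1 \<Rightarrow> 'b \<Rightarrow> 'b" where
  "path2_cod G g h a2 = vcomp2 G (p1c h) (rw2 G a2 (p1s g))"

definition path3_lhs :: "('o,'a,'b,'c) gray \<Rightarrow> ('a,'b,'c) pcell2 \<Rightarrow> ('a,'b,'c) pcell2 \<Rightarrow> 'c \<Rightarrow> 'c" where
  "path3_lhs G A B C1 = vcomp3 G (p2c B) (hcomp3 G (lw3 G (p1t (p2s A)) C1) (id3 G (p1c (p2s A))))"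

definition path3_rhs :: "('o,'a,'b,'c) gray \<Rightarrow> ('a,'b,'c) pcell2 \<Rightarrow> 'c \<Rightarrow> 'c" where
  "path3_rhs G A C2 = vcomp3 G (hcomp3 G (id3 G (p1c (p2t A))) (rw3 G C2 (p1s (p2s A)))) (p2c A)"

lemma path_cells1_iff:
  "g \<in> path_cells1 G \<longleftrightarrow>
     p1s g \<in> Cell1 G \<and> p1t g \<in> Cell1 G \<and> p1l g \<in> Cell1 G \<and> p1r g \<in> Cell1 G
   \<and> src1 G (p1l g) = src1 G (p1s g) \<and> tgt1 G (p1l g) = src1 G (p1t g)
   \<and> src1 G (p1r g) = tgt1 G (p1s g) \<and> tgt1 G (p1r g) = tgt1 G (p1t g)
   \<and> p1c g \<in> Cell2 G \<and> src2 G (p1c g) = comp1 G (p1r g) (p1s g)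
   \<and> tgt2 G (p1c g) = comp1 G (p1t g) (p1l g)"
  by (cases g) (simp add: path_cells1_def)

lemma path_cells2_iff:
  "A \<in> path_cells2 G \<longleftrightarrow>
     p2s A \<in> path_cells1 G \<and> p2t A \<in> path_cells1 G
   \<and> p1s (p2s A) = p1s (p2t A) \<and> p1t (p2s A) = p1t (p2t A)
   \<and> p2l A \<in> Cell2 G \<and> src2 G (p2l A) = p1l (p2s A) \<and> tgt2 G (p2l A) = p1l (p2t A)
   \<and> p2r A \<in> Cell2 G \<and> src2 G (p2r A) = p1r (p2s A) \<and> tgt2 G (p2r A) = p1r (p2t A)
   \<and> p2c A \<in> Cell3 G \<and> src3 G (p2c A) = path2_dom G (p2s A) (p2l A)
   \<and> tgt3 G (p2c A) = path2_cod G (p2s A) (p2t A) (p2r A)"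
  by (cases A) (simp add: path_cells2_def path2_dom_def path2_cod_def)

lemma path_cells3_iff:
  "(A, B, C1, C2) \<in> path_cells3 G \<longleftrightarrow>
     A \<in> path_cells2 G \<and> B \<in> path_cells2 G \<and> p2s A = p2s B \<and> p2t A = p2t B
   \<and> C1 \<in> Cell3 G \<and> src3 G C1 = p2l A \<and> tgt3 G C1 = p2l B
   \<and> C2 \<in> Cell3 G \<and> src3 G C2 = p2r A \<and> tgt3 G C2 = p2r B
   \<and> path3_lhs G A B C1 = path3_rhs G A C2"
  by (simp add: path_cells3_def path3_lhs_def path3_rhs_def)

lemma pcell2_eqI:
  "\<lbrakk>p2s A = p2s B; p2t A = p2t B; p2c A = p2c B; p2l A = p2l B; p2r A = p2r B\<rbrakk> \<Longrightarrow> A = B"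
  by (cases A, cases B) simp

lemma path_map1_sel [simp]:
  "p1s (path_map1 F g) = map1 F (p1s g)" "p1t (path_map1 F g) = map1 F (p1t g)"
  "p1c (path_map1 F g) = map2 F (p1c g)"
  "p1l (path_map1 F g) = map1 F (p1l g)" "p1r (path_map1 F g) = map1 F (p1r g)"
  by (cases g; simp)+

lemma path_map2_sel [simp]:
  "p2s (path_map2 F A) = path_map1 F (p2s A)" "p2t (path_map2 F A) = path_map1 F (p2t A)"
  "p2c (path_map2 F A) = map3 F (p2c A)"
  "p2l (path_map2 F A) = map2 F (p2l A)" "p2r (path_map2 F A) = map2 F (p2r A)"
  by (cases A; simp)+

context gray_cat
begin

lemmas cell_rules = src1_ob tgt1_ob src2_cell tgt2_cell src3_cell tgt3_cell
  id1 comp1 id2 vcomp2 id3 vcomp3 hcomp3 lw2 rw2 lw3 rw3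

lemma path2_dom_cod_parallel:
  assumes "g \<in> path_cells1 G" "h \<in> path_cells1 G" "p1s g = p1s h" "p1t g = p1t h"
    and "a1 \<in> Cell2 G" "src2 G a1 = p1l g" "tgt2 G a1 = p1l h"
    and "a2 \<in> Cell2 G" "src2 G a2 = p1r g" "tgt2 G a2 = p1r h"
  shows "path2_dom G g a1 \<in> Cell2 G" "path2_cod G g h a2 \<in> Cell2 G"
    "src2 G (path2_dom G g a1) = src2 G (path2_cod G g h a2)"
    "tgt2 G (path2_dom G g a1) = tgt2 G (path2_cod G g h a2)"
  using assms by (auto simp: path2_dom_def path2_cod_def path_cells1_iff cell_rules)

lemma path3_sides_parallel:
  assumes "A \<in> path_cells2 G" "B \<in> path_cells2 G" "p2s A = p2s B" "p2t A = p2t B"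
    and "C1 \<in> Cell3 G" "src3 G C1 = p2l A" "tgt3 G C1 = p2l B"
    and "C2 \<in> Cell3 G" "src3 G C2 = p2r A" "tgt3 G C2 = p2r B"
  shows "path3_lhs G A B C1 \<in> Cell3 G" "path3_rhs G A C2 \<in> Cell3 G"
    "src3 G (path3_lhs G A B C1) = src3 G (path3_rhs G A C2)"
    "tgt3 G (path3_lhs G A B C1) = tgt3 G (path3_rhs G A C2)"
  using assms
  by (auto simp: path3_lhs_def path3_rhs_def path2_dom_def path2_cod_def
      path_cells2_iff path_cells1_iff cell_rules)

end

context gray_functor
begin

lemmas map_rules = map1_cell map2_cell map3_cell map1_src map1_tgt map2_src map2_tgt
  map3_src map3_tgt map_comp1 map_id2 map_vcomp2 map_id3 map_vcomp3 map_hcomp3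
  map_lw2 map_rw2 map_lw3 map_rw3

lemma path_map1_cell: "g \<in> path_cells1 G \<Longrightarrow> path_map1 F g \<in> path_cells1 H"
  by (simp add: path_cells1_iff map_rules)

lemma map2_path2_dom:
  assumes "g \<in> path_cells1 G" "a1 \<in> Cell2 G" "src2 G a1 = p1l g"
  shows "map2 F (path2_dom G g a1) = path2_dom H (path_map1 F g) (map2 F a1)"
  using assms by (auto simp: path2_dom_def path_cells1_iff G.cell_rules map_rules)

lemma map2_path2_cod:
  assumes "g \<in> path_cells1 G" "h \<in> path_cells1 G" "p1s g = p1s h"
    and "a2 \<in> Cell2 G" "src2 G a2 = p1r g" "tgt2 G a2 = p1r h"
  shows "map2 F (path2_cod G g h a2) = path2_cod H (path_map1 F g) (path_map1 F h) (map2 F a2)"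
  using assms by (auto simp: path2_cod_def path_cells1_iff G.cell_rules map_rules)

lemma path_map2_cell:
  assumes "A \<in> path_cells2 G" shows "path_map2 F A \<in> path_cells2 H"
  using assms by (auto simp: path_cells2_iff path_map1_cell map_rules map2_path2_dom map2_path2_cod)

lemma map3_path3_sides:
  assumes "A \<in> path_cells2 G" "B \<in> path_cells2 G" "p2s A = p2s B" "p2t A = p2t B"
    and "C1 \<in> Cell3 G" "src3 G C1 = p2l A" "tgt3 G C1 = p2l B"
    and "C2 \<in> Cell3 G" "src3 G C2 = p2r A" "tgt3 G C2 = p2r B"
  shows "map3 F (path3_lhs G A B C1) = path3_lhs H (path_map2 F A) (path_map2 F B) (map3 F C1)"
    "map3 F (path3_rhs G A C2) = path3_rhs H (path_map2 F A) (map3 F C2)"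
  using assms by (auto simp: path3_lhs_def path3_rhs_def path2_dom_def path2_cod_def
      path_cells2_iff path_cells1_iff G.cell_rules map_rules)

lemma path_map3_cell:
  assumes "(A, B, C1, C2) \<in> path_cells3 G" shows "path_map3 F (A, B, C1, C2) \<in> path_cells3 H"
proof -
  have cells: "A \<in> path_cells2 G" "B \<in> path_cells2 G" "p2s A = p2s B" "p2t A = p2t B"
    "C1 \<in> Cell3 G" "src3 G C1 = p2l A" "tgt3 G C1 = p2l B"
    "C2 \<in> Cell3 G" "src3 G C2 = p2r A" "tgt3 G C2 = p2r B"
    and eq: "path3_lhs G A B C1 = path3_rhs G A C2"
    using assms by (simp_all add: path_cells3_iff)
  have "path3_lhs H (path_map2 F A) (path_map2 F B) (map3 F C1)
      = path3_rhs H (path_map2 F A) (map3 F C2)"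
    using eq map3_path3_sides[OF cells] by simp
  then show ?thesis
    using cells by (simp add: path_cells3_iff path_map2_cell map_rules)
qed

end

locale cartesian_gray_functor = gray_functor +
  assumes cartesian: "cartesian1 G H F"
begin

lemma map2_inj_parallel:
  assumes "a \<in> Cell2 G" "a' \<in> Cell2 G" "src2 G a = src2 G a'" "tgt2 G a = tgt2 G a'"
    and "map2 F a = map2 F a'"
  shows "a = a'"
proof -
  have "inj_on (map2 F) {x \<in> Cell2 G. src2 G x = src2 G a \<and> tgt2 G x = tgt2 G a}"
    using cartesian assms(1) G.par2[OF assms(1)] G.src2_cell G.tgt2_cell
    unfolding cartesian1_def bij_betw_def by blast
  then show ?thesis
    using assms by (auto dest: inj_onD)
qed

lemma map2_lift:
  assumes "f \<in> Cell1 G" "f' \<in> Cell1 G" "src1 G f = src1 G f'" "tgt1 G f = tgt1 G f'"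
    and "b \<in> Cell2 H" "src2 H b = map1 F f" "tgt2 H b = map1 F f'"
  obtains a where "a \<in> Cell2 G" "src2 G a = f" "tgt2 G a = f'" "map2 F a = b"
proof -
  have "b \<in> map2 F ` {a \<in> Cell2 G. src2 G a = f \<and> tgt2 G a = f'}"
    using cartesian assms unfolding cartesian1_def bij_betw_def by blast
  then show ?thesis
    using that by blast
qed

lemma map3_inj_parallel:
  assumes "C \<in> Cell3 G" "C' \<in> Cell3 G" "src3 G C = src3 G C'" "tgt3 G C = tgt3 G C'"
    and "map3 F C = map3 F C'"
  shows "C = C'"
proof -
  have "inj_on (map3 F) {x \<in> Cell3 G. src3 G x = src3 G C \<and> tgt3 G x = tgt3 G C}"
    using cartesian assms(1) G.par3[OF assms(1)] G.src3_cell G.tgt3_cell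
    unfolding cartesian1_def bij_betw_def by blast
  then show ?thesis
    using assms by (auto dest: inj_onD)
qed

lemma map3_lift:
  assumes "a \<in> Cell2 G" "a' \<in> Cell2 G" "src2 G a = src2 G a'" "tgt2 G a = tgt2 G a'"
    and "D \<in> Cell3 H" "src3 H D = map2 F a" "tgt3 H D = map2 F a'"
  obtains C where "C \<in> Cell3 G" "src3 G C = a" "tgt3 G C = a'" "map3 F C = D"
proof -
  have "D \<in> map3 F ` {C \<in> Cell3 G. src3 G C = a \<and> tgt3 G C = a'}"
    using cartesian assms unfolding cartesian1_def bij_betw_def by blast
  then show ?thesis
    using that by blast
qed

lemma path_map2_inj_parallel:
  assumes "A \<in> path_cells2 G" "A' \<in> path_cells2 G" "p2s A = p2s A'" "p2t A = p2t A'"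
    and "path_map2 F A = path_map2 F A'"
  shows "A = A'"
proof -
  have images: "map2 F (p2l A) = map2 F (p2l A')" "map2 F (p2r A) = map2 F (p2r A')"
    "map3 F (p2c A) = map3 F (p2c A')"
    using arg_cong[OF assms(5), of p2l] arg_cong[OF assms(5), of p2r]
      arg_cong[OF assms(5), of p2c] by simp_all
  have "p2l A = p2l A'" "p2r A = p2r A'"
    using assms(1-4) images map2_inj_parallel[of "p2l A" "p2l A'"]
      map2_inj_parallel[of "p2r A" "p2r A'"]
    by (simp_all add: path_cells2_iff)
  moreover have "p2c A = p2c A'"
    using assms(1-4) images calculation map3_inj_parallel[of "p2c A" "p2c A'"]
    by (simp add: path_cells2_iff)
  ultimately show ?thesis
    using assms(3,4) by (blast intro: pcell2_eqI)
qed

lemma path_map2_lift: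
  assumes g: "g \<in> path_cells1 G" and h: "h \<in> path_cells1 G"
    and par: "p1s g = p1s h" "p1t g = p1t h"
    and B: "B \<in> path_cells2 H" "p2s B = path_map1 F g" "p2t B = path_map1 F h"
  obtains A where "A \<in> path_cells2 G" "p2s A = g" "p2t A = h" "path_map2 F A = B"
proof -
  obtain a1 where a1: "a1 \<in> Cell2 G" "src2 G a1 = p1l g" "tgt2 G a1 = p1l h" "map2 F a1 = p2l B"
    by (rule map2_lift[of "p1l g" "p1l h" "p2l B"])
      (use B g h par in \<open>auto simp: path_cells1_iff path_cells2_iff\<close>)
  obtain a2 where a2: "a2 \<in> Cell2 G" "src2 G a2 = p1r g" "tgt2 G a2 = p1r h" "map2 F a2 = p2r B"
    by (rule map2_lift[of "p1r g" "p1r h" "p2r B"])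
      (use B g h par in \<open>auto simp: path_cells1_iff path_cells2_iff\<close>)
  obtain a3 where a3: "a3 \<in> Cell3 G" "src3 G a3 = path2_dom G g a1"
      "tgt3 G a3 = path2_cod G g h a2" "map3 F a3 = p2c B"
    by (rule map3_lift[of "path2_dom G g a1" "path2_cod G g h a2" "p2c B"])
      (use B a1 a2 G.path2_dom_cod_parallel[OF g h par a1(1-3) a2(1-3)] in
        \<open>auto simp: path_cells2_iff map2_path2_dom map2_path2_cod g h par\<close>)
  have "(g, h, a3, a1, a2) \<in> path_cells2 G"
    using g h par a1 a2 a3 by (simp add: path_cells2_iff)
  moreover have "path_map2 F (g, h, a3, a1, a2) = B"
    using B a1 a2 a3 by (intro pcell2_eqI) simp_all
  ultimately show ?thesis
    using that by simp
qed

lemma path_map3_lift: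
  assumes A: "A \<in> path_cells2 G" and B: "B \<in> path_cells2 G"
    and par: "p2s A = p2s B" "p2t A = p2t B"
    and D: "(path_map2 F A, path_map2 F B, D1, D2) \<in> path_cells3 H"
  obtains C1 C2 where "(A, B, C1, C2) \<in> path_cells3 G" "map3 F C1 = D1" "map3 F C2 = D2"
proof -
  obtain C1 where C1: "C1 \<in> Cell3 G" "src3 G C1 = p2l A" "tgt3 G C1 = p2l B" "map3 F C1 = D1"
    by (rule map3_lift[of "p2l A" "p2l B" D1])
      (use A B par D in \<open>auto simp: path_cells2_iff path_cells3_iff\<close>)
  obtain C2 where C2: "C2 \<in> Cell3 G" "src3 G C2 = p2r A" "tgt3 G C2 = p2r B" "map3 F C2 = D2"
    by (rule map3_lift[of "p2r A" "p2r B" D2])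
      (use A B par D in \<open>auto simp: path_cells2_iff path_cells3_iff\<close>)
  note sides = G.path3_sides_parallel[OF A B par C1(1-3) C2(1-3)]
  have "map3 F (path3_lhs G A B C1) = map3 F (path3_rhs G A C2)"
    using D C1 C2 map3_path3_sides[OF A B par C1(1-3) C2(1-3)] by (simp add: path_cells3_iff)
  then have "path3_lhs G A B C1 = path3_rhs G A C2"
    using sides by (rule map3_inj_parallel[rotated 4])
  then have "(A, B, C1, C2) \<in> path_cells3 G"
    using A B par C1 C2 by (simp add: path_cells3_iff)
  then show ?thesis
    using that C1 C2 by blast
qed

lemma path_map2_bij:
  assumes g: "g \<in> path_cells1 G" and h: "h \<in> path_cells1 G" and par: "p1s g = p1s h" "p1t g = p1t h"
  shows "bij_betw (path_map2 F) {A \<in> path_cells2 G. p2s A = g \<and> p2t A = h}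
           {B \<in> path_cells2 H. p2s B = path_map1 F g \<and> p2t B = path_map1 F h}"
proof (rule bij_betwI')
  fix A A' assume "A \<in> {A \<in> path_cells2 G. p2s A = g \<and> p2t A = h}"
    and "A' \<in> {A \<in> path_cells2 G. p2s A = g \<and> p2t A = h}"
  then show "(path_map2 F A = path_map2 F A') = (A = A')"
    using path_map2_inj_parallel[of A A'] by fastforce
next
  fix A assume "A \<in> {A \<in> path_cells2 G. p2s A = g \<and> p2t A = h}"
  then show "path_map2 F A \<in> {B \<in> path_cells2 H. p2s B = path_map1 F g \<and> p2t B = path_map1 F h}"
    using path_map2_cell by simp
next
  fix B assume "B \<in> {B \<in> path_cells2 H. p2s B = path_map1 F g \<and> p2t B = path_map1 F h}"
  then have B: "B \<in> path_cells2 H" "p2s B = path_map1 F g" "p2t B = path_map1 F h"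
    by simp_all
  obtain A where "A \<in> path_cells2 G" "p2s A = g" "p2t A = h" "path_map2 F A = B"
    using g h par B by (rule path_map2_lift)
  then show "\<exists>A \<in> {A \<in> path_cells2 G. p2s A = g \<and> p2t A = h}. B = path_map2 F A"
    by blast
qed

lemma path_map3_bij:
  assumes A: "A \<in> path_cells2 G" and B: "B \<in> path_cells2 G"
    and par: "p2s A = p2s B" "p2t A = p2t B"
  shows "bij_betw (path_map3 F) {X \<in> path_cells3 G. p3s X = A \<and> p3t X = B}
           {Y \<in> path_cells3 H. p3s Y = path_map2 F A \<and> p3t Y = path_map2 F B}"
proof (rule bij_betwI')
  fix X X' assume "X \<in> {X \<in> path_cells3 G. p3s X = A \<and> p3t X = B}"
    and "X' \<in> {X \<in> path_cells3 G. p3s X = A \<and> p3t X = B}"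
  then obtain C1 C2 C1' C2' where X: "X = (A, B, C1, C2)" "(A, B, C1, C2) \<in> path_cells3 G"
    and X': "X' = (A, B, C1', C2')" "(A, B, C1', C2') \<in> path_cells3 G"
    by (cases X, cases X') auto
  show "(path_map3 F X = path_map3 F X') = (X = X')"
  proof
    assume "path_map3 F X = path_map3 F X'"
    then have "map3 F C1 = map3 F C1'" "map3 F C2 = map3 F C2'"
      using X(1) X'(1) by simp_all
    then have "C1 = C1'" "C2 = C2'"
      using map3_inj_parallel[of C1 C1'] map3_inj_parallel[of C2 C2'] X(2) X'(2)
      by (simp_all add: path_cells3_iff)
    then show "X = X'"
      using X(1) X'(1) by simp
  qed simp
next
  fix X assume "X \<in> {X \<in> path_cells3 G. p3s X = A \<and> p3t X = B}"
  then show "path_map3 F X \<in> {Y \<in> path_cells3 H. p3s Y = path_map2 F A \<and> p3t Y = path_map2 F B}"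
    by (cases X) (auto dest: path_map3_cell)
next
  fix Y assume "Y \<in> {Y \<in> path_cells3 H. p3s Y = path_map2 F A \<and> p3t Y = path_map2 F B}"
  then obtain D1 D2 where Y: "Y = (path_map2 F A, path_map2 F B, D1, D2)"
      "(path_map2 F A, path_map2 F B, D1, D2) \<in> path_cells3 H"
    by (cases Y) auto
  obtain C1 C2 where "(A, B, C1, C2) \<in> path_cells3 G" "map3 F C1 = D1" "map3 F C2 = D2"
    using A B par Y(2) by (rule path_map3_lift)
  then show "\<exists>X \<in> {X \<in> path_cells3 G. p3s X = A \<and> p3t X = B}. Y = path_map3 F X"
    using Y(1) by (intro bexI[of _ "(A, B, C1, C2)"]) simp_all
qed

lemma path_fun_cartesian1: "cartesian1 (path G) (path H) (path_fun F)"
  unfolding cartesian1_def path_def path_fun_def gray.select_convs gfun.select_convs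
  using path_map2_bij path_map3_bij by blast

end

theorem mainTheorem8:
  fixes G :: "('o,'a,'b,'c) gray" and H :: "('p,'d,'e,'k) gray"
    and F :: "('o,'a,'b,'c,'p,'d,'e,'k) gfun"
  assumes "gray_functor G H F"
    and "cartesian1 G H F"
  shows "cartesian1 (path G) (path H) (path_fun F)"
proof -
  interpret cartesian_gray_functor G H F
    using assms by (intro cartesian_gray_functor.intro cartesian_gray_functor_axioms.intro)
  show ?thesis
    by (rule path_fun_cartesian1)
qed

end
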